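(* Let $m_0 = -468$ and $C_0 = -4330$, and let $P = 2^3\cdot 3\cdot 5\cdot 7\cdot 11\cdot 13\cdot 31\cdot 433\cdot 2017\cdot 3253\cdot 8501\cdot 32687\cdot 46649\cdot 4057231$. For $k\in\mathbb{Z}$, let $\mathcal{U}_k$ be the affine scheme over $\mathbb{Z}$ defined by $$(x^2-36)(y^2-36)(z^2-36) - m_0(xyz+C_0)^2 - k = 0.$$ If $k>0$ and $k\equiv 1\pmod P$, then $\mathcal{U}_k(\mathbf{A}_{\mathbb{Z}})\neq\emptyset$.
   Context: For an affine scheme $\mathcal{U}$ of finite type over $\mathbb{Z}$, $\mathcal{U}(\mathbf{A}_{\mathbb{Z}}) = \mathcal{U}(\mathbb{R})\times\prod_{p} \mathcal{U}(\mathbb{Z}_p)$, the product over all primes $p$. Thus the claim is that the equation has a real solution and a solution in $\mathbb{Z}_p^3$ for every prime $p$. *)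

theory Defs
  imports Complex_Main "HOL-Computational_Algebra.Primes" "HOL-Number_Theory.Cong"
begin

definition m0 :: int where "m0 = -468"
definition C0 :: int where "C0 = -4330"
definition P0 :: int where
  "P0 = 2^3 * 3 * 5 * 7 * 11 * 13 * 31 * 433 * 2017 * 3253 * 8501 * 32687 * 46649 * 4057231"

definition U_poly :: "int \<Rightarrow> 'a::comm_ring_1 \<Rightarrow> 'a \<Rightarrow> 'a \<Rightarrow> 'a" where
  "U_poly k x y z = (x^2 - 36) * (y^2 - 36) * (z^2 - 36)
                    - of_int m0 * (x * y * z + of_int C0)^2 - of_int k"

text \<open>p-adic integers as the inverse limit of Z/p^n Z: compatible sequences of
  residues x n in {0..<p^n} with x (n+1) reducing to x n mod p^n.\<close>
definition padic_int :: "int \<Rightarrow> (nat \<Rightarrow> int) set" where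
  "padic_int p = {x. \<forall>n. 0 \<le> x n \<and> x n < p ^ n \<and> x (Suc n) mod p ^ n = x n}"

text \<open>A point of U_k over Z_p: ring operations in the inverse limit are componentwise,
  so the equation holds iff it holds in Z/p^n Z for every n.\<close>
definition has_Zp_point :: "int \<Rightarrow> int \<Rightarrow> bool" where
  "has_Zp_point k p = (\<exists>x\<in>padic_int p. \<exists>y\<in>padic_int p. \<exists>z\<in>padic_int p.
      \<forall>n. U_poly k (x n) (y n) (z n) mod p ^ n = 0)"

definition has_R_point :: "int \<Rightarrow> bool" where
  "has_R_point k = (\<exists>x y z :: real. U_poly k x y z = 0)"

definition has_adelic_point :: "int \<Rightarrow> bool" where
  "has_adelic_point k = (has_R_point k \<and> (\<forall>p::int. prime p \<longrightarrow> has_Zp_point k p))"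

end

theory Submission
  imports Defs "HOL-Computational_Algebra.Polynomial"
begin

(* Along y = 12, z = 6/25 the coefficient of x^2 in U_k vanishes, and U_k is linear in x with
   slope -2 m0 C0 12 (6/25) = -2^7 3^4 5 13 433 / 25.  This gives a real point for every k, and for every prime p not dividing 2 3 5 13 433 a simple
   root modulo p, which Hensel's lemma lifts to a Z_p-point.  The remaining primes divide P0, so
   for them U_k agrees with U_1 modulo 2^3 resp. p, and explicit approximate roots of U_1 whose
   x-derivative has the right p-adic valuation lift in the same way. *)

lemma poly_cong:
  fixes f :: "'a::unique_euclidean_ring poly"
  assumes "[a = b] (mod m)"
  shows "[poly f a = poly f b] (mod m)"
  using assms by (induction f) (simp_all add: cong_add cong_mult)

lemma square_dvd_poly_taylor_remainder:
  fixes f :: "'a::idom poly"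
  shows "h^2 dvd poly f (b + h) - poly f b - h * poly (pderiv f) b"
proof (induction f)
  case (pCons c f)
  then obtain g where g: "poly f (b + h) - poly f b - h * poly (pderiv f) b = h^2 * g"
    by (auto simp: dvd_def)
  have "poly (pCons c f) (b + h) - poly (pCons c f) b - h * poly (pderiv (pCons c f)) b
      = (b + h) * (poly f (b + h) - poly f b - h * poly (pderiv f) b) + h^2 * poly (pderiv f) b"
    by (simp add: pderiv_pCons algebra_simps power2_eq_square)
  also have "\<dots> = h^2 * ((b + h) * g + poly (pderiv f) b)"
    unfolding g by (simp add: algebra_simps)
  finally show ?case by simp
qed simp

lemma hensel_lift_step:
  fixes f :: "int poly" and p b :: int and m n :: nat
  assumes p: "prime p"
    and dvd_deriv: "p^m dvd poly (pderiv f) b"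
    and not_dvd_deriv: "\<not> p^Suc m dvd poly (pderiv f) b"
    and dvd_value: "p^(2*m+1+n) dvd poly f b"
  shows "\<exists>c. [c = b] (mod p^(m+1+n)) \<and> p^(2*m+2+n) dvd poly f c"
proof -
  obtain u where u: "poly (pderiv f) b = p^m * u"
    using dvd_deriv by (auto simp: dvd_def)
  have "\<not> p dvd u"
    using not_dvd_deriv u by (auto simp: mult_dvd_mono)
  then have "coprime u p"
    using p by (simp add: prime_imp_coprime ac_simps)
  then obtain v where v: "[u * v = 1] (mod p)"
    using cong_solve_coprime_int by blast
  obtain s where s: "poly f b = p^(2*m+1+n) * s"
    using dvd_value by (auto simp: dvd_def)
  \<comment> \<open>Newton correction: h is -f(b)/f'(b) to the precision needed.\<close>
  define h where "h = p^(m+1+n) * (- s * v)"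
  have pow_eq: "p^(2*m+1+n) = p^(m+1+n) * p^m"
    unfolding power_add[symmetric] by (rule arg_cong[where f = "(^) p"]) simp
  have "poly f b + h * poly (pderiv f) b = p^(2*m+1+n) * (s - s * (u * v))"
    unfolding s u h_def pow_eq by (simp add: algebra_simps)
  moreover have "p dvd s - s * (u * v)"
    using cong_mult[OF cong_refl[of s] v] by (simp add: cong_iff_dvd_diff dvd_diff_commute)
  ultimately have "p^(2*m+2+n) dvd poly f b + h * poly (pderiv f) b"
    by (simp add: mult_dvd_mono)
  moreover have "p^(2*m+2+n) dvd h^2"
    unfolding h_def power_mult_distrib power_mult[symmetric]
    by (intro dvd_mult2 le_imp_power_dvd) simp
  ultimately have "p^(2*m+2+n) dvd
      (poly f b + h * poly (pderiv f) b) + (poly f (b + h) - poly f b - h * poly (pderiv f) b)"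
    using square_dvd_poly_taylor_remainder[of h f b] by (blast intro: dvd_add dvd_trans)
  then have "p^(2*m+2+n) dvd poly f (b + h)"
    by simp
  moreover have "[b + h = b] (mod p^(m+1+n))"
    unfolding h_def by (simp add: cong_iff_dvd_diff)
  ultimately show ?thesis by blast
qed

lemma padic_int_residues:
  fixes p :: int and a :: "nat \<Rightarrow> int"
  assumes "p > 1" and "\<And>n. [a (Suc n) = a n] (mod p^n)"
  shows "(\<lambda>n. a n mod p^n) \<in> padic_int p"
  unfolding padic_int_def
proof (intro CollectI allI conjI)
  fix n
  show "0 \<le> a n mod p^n" and "a n mod p^n < p^n"
    using assms(1) by simp_all
  show "a (Suc n) mod p^Suc n mod p^n = a n mod p^n"
    using assms(2)[of n] by (simp add: cong_def mod_mod_cancel le_imp_power_dvd)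
qed

lemma hensel_lifting:
  fixes f :: "int poly" and p a :: int and m :: nat
  assumes p: "prime p"
    and dvd_deriv: "p^m dvd poly (pderiv f) a"
    and not_dvd_deriv: "\<not> p^Suc m dvd poly (pderiv f) a"
    and dvd_value: "p^(2*m+1) dvd poly f a"
  shows "\<exists>x\<in>padic_int p. \<forall>n. p^n dvd poly f (x n)"
proof -
  define approx
    where "approx n b \<longleftrightarrow> [b = a] (mod p^(m+1)) \<and> p^(2*m+1+n) dvd poly f b" for n b
  have "\<exists>c. approx (Suc n) c \<and> [c = b] (mod p^n)" if "approx n b" for n b
  proof -
    from that have ba: "[b = a] (mod p^(m+1))" and "p^(2*m+1+n) dvd poly f b"
      unfolding approx_def by auto
    have "[poly (pderiv f) b = poly (pderiv f) a] (mod p^Suc m)"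
      using ba by (simp add: poly_cong)
    then have "p^m dvd poly (pderiv f) b" and "\<not> p^Suc m dvd poly (pderiv f) b"
      using dvd_deriv not_dvd_deriv
      by (auto simp: cong_dvd_iff dest: cong_dvd_modulus[where n = "p^m"])
    then obtain c where cb: "[c = b] (mod p^(m+1+n))" and c_value: "p^(2*m+2+n) dvd poly f c"
      using hensel_lift_step[OF p] \<open>p^(2*m+1+n) dvd poly f b\<close> by blast
    have "p^(m+1) dvd p^(m+1+n)" and "p^n dvd p^(m+1+n)"
      by (simp_all add: le_imp_power_dvd)
    then have "[c = b] (mod p^(m+1))" and "[c = b] (mod p^n)"
      using cb cong_dvd_modulus by blast+
    with ba c_value show ?thesis
      unfolding approx_def by (auto intro: cong_trans)
  qed
  moreover have "approx 0 a"
    unfolding approx_def using dvd_value by simp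
  ultimately obtain seq
    where seq: "\<And>n. approx n (seq n)" "\<And>n. [seq (Suc n) = seq n] (mod p^n)"
    using dependent_nat_choice[of approx "\<lambda>n b c. [c = b] (mod p^n)"] by blast
  have "p^n dvd poly f (seq n mod p^n)" for n
  proof -
    have "p^n dvd p^(2*m+1+n)"
      by (simp add: le_imp_power_dvd)
    then have "p^n dvd poly f (seq n)"
      using seq(1)[of n] unfolding approx_def by (blast intro: dvd_trans)
    moreover have "[poly f (seq n mod p^n) = poly f (seq n)] (mod p^n)"
      by (intro poly_cong) (simp add: cong_def)
    ultimately show ?thesis
      by (simp add: cong_dvd_iff)
  qed
  moreover have "(\<lambda>n. seq n mod p^n) \<in> padic_int p"
    using p seq(2) by (simp add: padic_int_residues prime_gt_1_int)
  ultimately show ?thesis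
    by (intro bexI[where x = "\<lambda>n. seq n mod p^n"]) simp_all
qed

definition U_xpoly :: "int \<Rightarrow> int \<Rightarrow> int \<Rightarrow> int poly" where
  "U_xpoly k y z =
     [: - 36 * (y^2 - 36) * (z^2 - 36) - m0 * C0^2 - k,
        - 2 * m0 * C0 * y * z,
        (y^2 - 36) * (z^2 - 36) - m0 * y^2 * z^2 :]"

definition U_poly_dx :: "int \<Rightarrow> int \<Rightarrow> int \<Rightarrow> int" where
  "U_poly_dx x y z = 2 * x * (y^2 - 36) * (z^2 - 36) - 2 * m0 * y * z * (x * y * z + C0)"

lemma poly_U_xpoly: "poly (U_xpoly k y z) x = U_poly k x y z"
  unfolding U_xpoly_def U_poly_def by (simp add: algebra_simps power2_eq_square)

lemma poly_pderiv_U_xpoly: "poly (pderiv (U_xpoly k y z)) x = U_poly_dx x y z"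
  unfolding U_xpoly_def U_poly_dx_def by (simp add: pderiv_pCons algebra_simps power2_eq_square)

lemma U_poly_cong:
  fixes x y z y' z' :: int
  assumes "[y = y'] (mod M)" and "[z = z'] (mod M)"
  shows "[U_poly k x y z = U_poly k x y' z'] (mod M)"
  unfolding U_poly_def using assms by (intro cong_add cong_diff cong_mult cong_pow cong_refl)

lemma has_Zp_point_hensel:
  fixes p a y z :: int and m :: nat
  assumes p: "prime p"
    and dvd_deriv: "p^m dvd U_poly_dx a y z" and not_dvd_deriv: "\<not> p^Suc m dvd U_poly_dx a y z"
    and dvd_value: "p^(2*m+1) dvd U_poly k a y z"
  shows "has_Zp_point k p"
proof -
  obtain x where x: "x \<in> padic_int p" and root: "\<And>n. p^n dvd U_poly k (x n) y z"
    using hensel_lifting[OF p, of m "U_xpoly k y z" a] dvd_deriv not_dvd_deriv dvd_value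
    by (auto simp: poly_U_xpoly poly_pderiv_U_xpoly)
  have "U_poly k (x n) (y mod p^n) (z mod p^n) mod p^n = 0" for n
    using root[of n] U_poly_cong[of "y mod p^n" y "p^n" "z mod p^n" z k "x n"]
    by (simp add: cong_def dvd_eq_mod_eq_0)
  moreover have "(\<lambda>n. c mod p^n) \<in> padic_int p" for c
    using p by (simp add: padic_int_residues prime_gt_1_int)
  ultimately show ?thesis
    unfolding has_Zp_point_def using x
    by (intro bexI[where x = x] bexI[where x = "\<lambda>n. y mod p^n"]
        bexI[where x = "\<lambda>n. z mod p^n"]) simp_all
qed

lemma has_R_point: "has_R_point k"
proof -
  define c :: real where "c = 2 * m0 * C0 * 12 * (6/25)"
  define r :: real where "r = U_poly k 0 12 (6/25)"
  have linear: "U_poly k x 12 (6/25) = r - c * x" for x :: real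
    unfolding r_def U_poly_def c_def m0_def C0_def
    by (simp add: algebra_simps power2_eq_square diff_divide_distrib)
  have "c \<noteq> 0"
    by (simp add: c_def m0_def C0_def)
  then have "U_poly k (r / c) 12 (6/25) = (0::real)"
    unfolding linear by simp
  then show ?thesis
    unfolding has_R_point_def by blast
qed

lemma simple_root_mod_prime_linear_reduction:
  fixes p R L Q :: int
  assumes p: "prime p" and "p dvd Q" and "\<not> p dvd L"
  shows "\<exists>a. p dvd poly [:R, L, Q:] a \<and> \<not> p dvd poly (pderiv [:R, L, Q:]) a"
proof -
  have "coprime L p"
    using assms by (metis prime_imp_coprime coprime_commute)
  then obtain L' where L': "[L * L' = 1] (mod p)"
    using cong_solve_coprime_int by blast
  define a where "a = - R * L'"
  have "[poly [:R, L, Q:] a = R - R * (L * L') + a^2 * Q] (mod p)"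
    unfolding a_def by (simp add: algebra_simps power2_eq_square)
  also have "[R - R * (L * L') + a^2 * Q = R - R * 1 + a^2 * 0] (mod p)"
    using L' \<open>p dvd Q\<close>
    by (intro cong_add cong_diff cong_mult cong_refl) (auto simp: cong_0_iff)
  finally have "p dvd poly [:R, L, Q:] a"
    by (simp add: cong_0_iff)
  moreover have "[poly (pderiv [:R, L, Q:]) a = L] (mod p)"
    using \<open>p dvd Q\<close> by (simp add: pderiv_pCons cong_iff_dvd_diff)
  then have "\<not> p dvd poly (pderiv [:R, L, Q:]) a"
    using \<open>\<not> p dvd L\<close> by (simp add: cong_dvd_iff)
  ultimately show ?thesis by blast
qed

lemma has_Zp_point_if_not_dvd:
  fixes p :: int
  assumes p: "prime p" and not_dvd_primes: "\<not> p dvd 2 * 3 * 5 * 13 * 433"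
  shows "has_Zp_point k p"
proof -
  have not_dvd: "\<not> p dvd 2^7 * 3^4 * 5 * 13 * 433" and "\<not> p dvd 5"
    using not_dvd_primes
    unfolding prime_dvd_mult_iff[OF p] prime_dvd_power_iff[OF p zero_less_numeral] by simp_all
  then have "coprime (5^n) p" for n
    using p by (metis prime_imp_coprime coprime_commute coprime_power_left_iff)
  from this[of 2] this[of 4] have "coprime 25 p" and "coprime 625 p"
    by simp_all
  then obtain w where "[25 * w = 1] (mod p)"
    using cong_solve_coprime_int by blast
  define z where "z = 6 * w"
  have z: "[25 * z = 6] (mod p)"
    using cong_mult[OF cong_refl[of 6] \<open>[25 * w = 1] (mod p)\<close>]
    by (simp add: z_def ac_simps)
  define Q where "Q = (12^2 - 36) * (z^2 - 36) - m0 * 12^2 * z^2"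
  define L where "L = - 2 * m0 * C0 * 12 * z"
  have "625 * Q = 67500 * (25 * z)^2 - 2430000"
    unfolding Q_def m0_def by (simp add: algebra_simps power2_eq_square)
  also have "[\<dots> = 67500 * 6^2 - 2430000] (mod p)"
    by (intro cong_diff cong_mult cong_pow cong_refl z)
  finally have "p dvd Q"
    using \<open>coprime 625 p\<close>
    by (simp add: cong_0_iff coprime_dvd_mult_right_iff coprime_commute)
  have "25 * L = - 48634560 * (25 * z)"
    unfolding L_def m0_def C0_def by simp
  also have "[\<dots> = - (2^7 * 3^4 * 5 * 13 * 433)] (mod p)"
    using cong_mult[OF cong_refl[of "- 48634560"] z] by simp
  finally have "\<not> p dvd 25 * L"
    using not_dvd by (simp add: cong_dvd_iff)
  then have "\<not> p dvd L"
    by (auto intro: dvd_mult2)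
  then obtain a where "p dvd poly (U_xpoly k 12 z) a"
    and "\<not> p dvd poly (pderiv (U_xpoly k 12 z)) a"
    using simple_root_mod_prime_linear_reduction[OF p \<open>p dvd Q\<close>]
    unfolding U_xpoly_def Q_def L_def by blast
  then show ?thesis
    using has_Zp_point_hensel[OF p, where m = 0] by (simp add: poly_U_xpoly poly_pderiv_U_xpoly)
qed

lemma has_Zp_point_hensel_mod_P0:
  fixes p a y z :: int and m :: nat
  assumes k: "[k = 1] (mod P0)" and p: "prime p" and "p^(2*m+1) dvd P0"
    and dvd_deriv: "p^m dvd U_poly_dx a y z" and not_dvd_deriv: "\<not> p^Suc m dvd U_poly_dx a y z"
    and "p^(2*m+1) dvd U_poly 1 a y z"
  shows "has_Zp_point k p"
proof (rule has_Zp_point_hensel[OF p dvd_deriv not_dvd_deriv])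
  have "p^(2*m+1) dvd k - 1"
    using k \<open>p^(2*m+1) dvd P0\<close> by (metis cong_iff_dvd_diff cong_sym dvd_trans)
  moreover have "U_poly k a y z = U_poly 1 a y z - (k - 1)"
    unfolding U_poly_def by simp
  ultimately show "p^(2*m+1) dvd U_poly k a y z"
    using \<open>p^(2*m+1) dvd U_poly 1 a y z\<close> by simp
qed

lemma has_Zp_point_P0_primes:
  assumes k: "[k = 1] (mod P0)" and "p \<in> {2, 3, 5, 13, 433}"
  shows "has_Zp_point k p"
proof -
  note defs = P0_def U_poly_def U_poly_dx_def m0_def C0_def
  from assms(2) consider "p = 2" | "p = 3" | "p = 5" | "p = 13" | "p = 433"
    by blast
  then show ?thesis
  proof cases
    case 1
    \<comment> \<open>U_poly_dx is always even, so p = 2 needs m = 1: hence the factor 2^3 of P0.\<close>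
    show ?thesis
      unfolding 1
      by (rule has_Zp_point_hensel_mod_P0[OF k, where m = 1 and a = 1 and y = 1 and z = 1])
        (simp_all add: defs)
  next
    case 2
    show ?thesis
      unfolding 2
      by (rule has_Zp_point_hensel_mod_P0[OF k, where m = 0 and a = 1 and y = 1 and z = 1])
        (simp_all add: defs)
  next
    case 3
    show ?thesis
      unfolding 3
      by (rule has_Zp_point_hensel_mod_P0[OF k, where m = 0 and a = 2 and y = 0 and z = 2])
        (simp_all add: defs)
  next
    case 4
    show ?thesis
      unfolding 4
      by (rule has_Zp_point_hensel_mod_P0[OF k, where m = 0 and a = 1 and y = 0 and z = 3])
        (simp_all add: defs)
  next
    case 5
    show ?thesis
      unfolding 5
      by (rule has_Zp_point_hensel_mod_P0[OF k, where m = 0 and a = 1 and y = 2 and z = 24])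
        (simp_all add: defs)
  qed
qed

theorem proposition5p1:
  fixes k :: int
  assumes "k > 0" and "[k = 1] (mod P0)"
  shows "has_adelic_point k"
proof -
  have "has_Zp_point k p" if p: "prime p" for p
  proof (cases "p \<in> {2, 3, 5, 13, 433}")
    case True
    with assms(2) show ?thesis
      by (rule has_Zp_point_P0_primes)
  next
    case False
    then have "\<not> p dvd 2 * 3 * 5 * 13 * 433"
      unfolding prime_dvd_mult_iff[OF p] using primes_dvd_imp_eq[OF p] by auto
    with p show ?thesis
      by (rule has_Zp_point_if_not_dvd)
  qed
  then show ?thesis
    unfolding has_adelic_point_def using has_R_point by blast
qed
end
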